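(* Let $M=(E,\mathcal{I})$ be a matroid, $\Delta$ a nonnegative integer, $w:E\to\{-\Delta,\dots,\Delta\}$ integer weights and $\mu\ge 0$. Let $A,B\in\mathcal{I}$ be disjoint with $|A|=|B|=k$ and $|w(A)-w(B)|\le\mu$. Then there are unicolor subsets $A'\subseteq A$ and $B'\subseteq B$ of equal cardinality such that (i) $(A\setminus A')\cup B'\in\mathcal{I}$, (ii) $|A'|=|B'|\ge (k-\mu)/(2\Delta+1)^4$, and (iii) $w(a)\ge w(b)$ for each $a\in A'$ and $b\in B'$.
   Context: $w(S)=\sum_{e\in S}w(e)$. A set $S\subseteq E$ is unicolor if $w(x)=w(y)$ for all $x,y\in S$. *)

theory Defs
  imports Complex_Main
begin

definition matroid :: "'a set \<Rightarrow> 'a set set \<Rightarrow> bool" where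
  "matroid E I \<longleftrightarrow>
     finite E \<and>
     (\<forall>X\<in>I. X \<subseteq> E) \<and>
     {} \<in> I \<and>
     (\<forall>X Y. X \<in> I \<longrightarrow> Y \<subseteq> X \<longrightarrow> Y \<in> I) \<and>
     (\<forall>X Y. X \<in> I \<longrightarrow> Y \<in> I \<longrightarrow> card X < card Y \<longrightarrow>
        (\<exists>e\<in>Y - X. insert e X \<in> I))"

definition wsum :: "('a \<Rightarrow> int) \<Rightarrow> 'a set \<Rightarrow> int" where
  "wsum w S = (\<Sum>e\<in>S. w e)"

definition unicolor :: "('a \<Rightarrow> int) \<Rightarrow> 'a set \<Rightarrow> bool" where
  "unicolor w S \<longleftrightarrow> (\<forall>x\<in>S. \<forall>y\<in>S. w x = w y)"

end

theory Submission
  imports Defs "HOL-Library.FuncSet"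
begin

(* Fix a threshold s and put P = {a \<in> A. s \<le> w a}, Q = {b \<in> B. w b \<le> s}; every exchange
   of a part of P against a part of Q satisfies (iii). Augmenting A - P from Q and trimming the
   removed side yields such an exchange of size at least |P| + |Q| - k. Summed over the 2\<Delta>+1
   thresholds s \<in> [-\<Delta>, \<Delta>], the quantity |P| + |Q| - k adds up to k + w(A) - w(B) \<ge> k - \<mu>,
   so a good threshold gives an exchange of size (k - \<mu>)/(2\<Delta>+1). Pigeonholing the added side
   by weight, re-matching the removed side by augmentation, and pigeonholing that in turn costs
   two more factors 2\<Delta>+1, so the argument even gives the exponent 3. *)

lemma card_Diff_Un_disjoint:
  assumes "finite A" "finite B" "A' \<subseteq> A" "A \<inter> B = {}"
  shows "card ((A - A') \<union> B) = card A - card A' + card B"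
proof -
  have "card ((A - A') \<union> B) = card (A - A') + card B"
    using assms by (intro card_Un_disjoint) auto
  then show ?thesis
    using assms card_mono[of A A'] by (simp add: card_Diff_subset finite_subset)
qed

lemma exists_ge_average:
  fixes f :: "'a \<Rightarrow> 'b::linordered_semidom"
  assumes "finite S" "S \<noteq> {}"
  shows "\<exists>s\<in>S. sum f S \<le> of_nat (card S) * f s"
proof -
  have "Max (f ` S) \<in> f ` S"
    using assms by (intro Max_in) auto
  then obtain s where "s \<in> S" "f s = Max (f ` S)"
    by auto
  then have "\<forall>x\<in>S. f x \<le> f s"
    using assms by simp
  then show ?thesis
    using \<open>s \<in> S\<close> sum_bounded_above[of S f "f s"] by blast
qed

lemma sum_card_weight_ge:
  fixes w :: "'a \<Rightarrow> int"
  assumes "finite X" "w ` X \<subseteq> {l..u}"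
  shows "int (\<Sum>s\<in>{l..u}. card {x\<in>X. s \<le> w x}) = wsum w X + (1 - l) * int (card X)"
proof -
  have "(\<Sum>s\<in>{l..u}. card {x\<in>X. s \<le> w x}) = (\<Sum>x\<in>X. card {s\<in>{l..u}. s \<le> w x})"
    using assms(1) by (intro sum_multicount_gen) auto
  then have "int (\<Sum>s\<in>{l..u}. card {x\<in>X. s \<le> w x}) = (\<Sum>x\<in>X. int (card {s\<in>{l..u}. s \<le> w x}))"
    by simp
  also have "\<dots> = (\<Sum>x\<in>X. w x + 1 - l)"
  proof (rule sum.cong)
    fix x assume "x \<in> X"
    then have "{s\<in>{l..u}. s \<le> w x} = {l..w x}" "l \<le> w x"
      using assms(2) by auto
    then show "int (card {s\<in>{l..u}. s \<le> w x}) = w x + 1 - l"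
      by simp
  qed simp
  finally show ?thesis
    by (simp add: wsum_def sum.distrib sum_subtractf algebra_simps)
qed

lemma sum_card_weight_le:
  fixes w :: "'a \<Rightarrow> int"
  assumes "finite X" "w ` X \<subseteq> {l..u}"
  shows "int (\<Sum>s\<in>{l..u}. card {x\<in>X. w x \<le> s}) = (u + 1) * int (card X) - wsum w X"
proof -
  have "(\<Sum>s\<in>{l..u}. card {x\<in>X. w x \<le> s}) = (\<Sum>x\<in>X. card {s\<in>{l..u}. w x \<le> s})"
    using assms(1) by (intro sum_multicount_gen) auto
  then have "int (\<Sum>s\<in>{l..u}. card {x\<in>X. w x \<le> s}) = (\<Sum>x\<in>X. int (card {s\<in>{l..u}. w x \<le> s}))"
    by simp
  also have "\<dots> = (\<Sum>x\<in>X. u + 1 - w x)"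
  proof (rule sum.cong)
    fix x assume "x \<in> X"
    then have "{s\<in>{l..u}. w x \<le> s} = {w x..u}" "w x \<le> u"
      using assms(2) by auto
    then show "int (card {s\<in>{l..u}. w x \<le> s}) = u + 1 - w x"
      by simp
  qed simp
  finally show ?thesis
    by (simp add: wsum_def sum_subtractf algebra_simps)
qed

lemma exists_threshold:
  fixes w :: "'a \<Rightarrow> int"
  assumes "finite A" "finite B" "card B = card A" "w ` (A \<union> B) \<subseteq> {l..u}" "l \<le> u"
  shows "\<exists>s. int (card A) + wsum w A - wsum w B \<le>
           (u - l + 1) * (int (card {a\<in>A. s \<le> w a}) + int (card {b\<in>B. w b \<le> s}) - int (card A))"
proof -
  define S where "S = {l..u}"
  define f where "f s = int (card {a\<in>A. s \<le> w a}) + int (card {b\<in>B. w b \<le> s}) - int (card A)" for s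
  have card_S: "int (card S) = u - l + 1"
    unfolding S_def using \<open>l \<le> u\<close> by simp
  have "w ` A \<subseteq> S" "w ` B \<subseteq> S"
    using assms(4) unfolding S_def by auto
  have "sum f S = int (\<Sum>s\<in>S. card {a\<in>A. s \<le> w a}) + int (\<Sum>s\<in>S. card {b\<in>B. w b \<le> s})
                   - int (card S) * int (card A)"
    unfolding f_def by (simp add: sum_subtractf sum.distrib)
  also have "\<dots> = int (card A) + wsum w A - wsum w B"
    unfolding S_def sum_card_weight_ge[OF assms(1) \<open>w ` A \<subseteq> S\<close>[unfolded S_def]]
      sum_card_weight_le[OF assms(2) \<open>w ` B \<subseteq> S\<close>[unfolded S_def]] card_S[unfolded S_def] assms(3)
    by (simp add: algebra_simps)
  finally have "sum f S = int (card A) + wsum w A - wsum w B" .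
  moreover obtain s where "sum f S \<le> of_nat (card S) * f s"
    using exists_ge_average[of S f] \<open>l \<le> u\<close> unfolding S_def by auto
  ultimately show ?thesis
    using card_S unfolding f_def by auto
qed

lemma unicolor_subset_pigeonhole:
  assumes "finite S" "finite C" "C \<noteq> {}" "w ` S \<subseteq> C"
  shows "\<exists>T\<subseteq>S. unicolor w T \<and> card S \<le> card T * card C"
proof -
  obtain c where "card S \<le> card (w -` {c} \<inter> S) * card C"
    using pigeonhole_card[of w S C] assms by blast
  moreover have "unicolor w (w -` {c} \<inter> S)"
    unfolding unicolor_def by auto
  ultimately show ?thesis
    by (intro exI[of _ "w -` {c} \<inter> S"]) auto
qed

lemma matroid_indep_subset_ground: "matroid E I \<Longrightarrow> X \<in> I \<Longrightarrow> X \<subseteq> E"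
  unfolding matroid_def by blast

lemma matroid_indep_finite: "matroid E I \<Longrightarrow> X \<in> I \<Longrightarrow> finite X"
  unfolding matroid_def by (meson finite_subset)

lemma matroid_indep_subset: "matroid E I \<Longrightarrow> X \<in> I \<Longrightarrow> Y \<subseteq> X \<Longrightarrow> Y \<in> I"
  unfolding matroid_def by blast

lemma matroid_augment:
  "matroid E I \<Longrightarrow> X \<in> I \<Longrightarrow> Y \<in> I \<Longrightarrow> card X < card Y \<Longrightarrow> \<exists>e\<in>Y - X. insert e X \<in> I"
  unfolding matroid_def by blast

lemma matroid_augment_to_card:
  assumes M: "matroid E I" and X: "X \<in> I" and Y: "Y \<in> I"
    and "card X \<le> n" "n \<le> card Y"
  shows "\<exists>Z \<subseteq> Y - X. X \<union> Z \<in> I \<and> card (X \<union> Z) = n"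
  using X \<open>card X \<le> n\<close>
proof (induction "n - card X" arbitrary: X)
  case 0
  then show ?case by (intro exI[of _ "{}"]) auto
next
  case (Suc m)
  have "card X < card Y" using Suc.hyps(2) \<open>n \<le> card Y\<close> by linarith
  then obtain e where e: "e \<in> Y - X" "insert e X \<in> I"
    using matroid_augment[OF M Suc.prems(1) Y] by blast
  have card_insert: "card (insert e X) = Suc (card X)"
    using e matroid_indep_finite[OF M Suc.prems(1)] by simp
  have "m = n - card (insert e X)" "card (insert e X) \<le> n"
    using card_insert Suc.hyps(2) by auto
  then obtain Z where Z: "Z \<subseteq> Y - insert e X" "insert e X \<union> Z \<in> I" "card (insert e X \<union> Z) = n"
    using Suc.hyps(1)[of "insert e X"] e(2) by blast
  then show ?case using e by (intro exI[of _ "insert e Z"]) auto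
qed

lemma exchange_shrink_removed:
  assumes M: "matroid E I" and A: "A \<in> I" and "A' \<subseteq> A" "A \<inter> B' = {}"
    and exch: "(A - A') \<union> B' \<in> I" and "card A' = card B'" and "A'' \<subseteq> A'"
  shows "\<exists>B''\<subseteq>B'. card B'' = card A'' \<and> (A - A'') \<union> B'' \<in> I"
proof -
  have fin: "finite A" "finite B'"
    using matroid_indep_finite[OF M A] matroid_indep_finite[OF M exch] by auto
  have "finite A'" using \<open>A' \<subseteq> A\<close> fin(1) by (rule finite_subset)
  have le: "card A'' \<le> card A'" "card A' \<le> card A"
    using \<open>finite A'\<close> fin assms(3,7) by (simp_all add: card_mono)
  have "card ((A - A') \<union> B') = card A"
    using card_Diff_Un_disjoint[OF fin] assms le by simp
  moreover have "A - A'' \<in> I"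
    using matroid_indep_subset[OF M A] by blast
  ultimately obtain Z where Z: "Z \<subseteq> ((A - A') \<union> B') - (A - A'')" "(A - A'') \<union> Z \<in> I"
      "card ((A - A'') \<union> Z) = card A"
    using matroid_augment_to_card[OF M _ exch, of "A - A''" "card A"] fin by (auto simp: card_mono)
  have "Z \<subseteq> B'" using Z(1) assms by auto
  moreover have "card ((A - A'') \<union> Z) = card A - card A'' + card Z"
    using \<open>Z \<subseteq> B'\<close> assms fin by (intro card_Diff_Un_disjoint) (auto intro: finite_subset)
  ultimately show ?thesis
    using Z(2,3) le by (intro exI[of _ Z]) auto
qed

lemma exchange_balance_removed:
  assumes M: "matroid E I" and A: "A \<in> I" and "A' \<subseteq> A" "A \<inter> B'' = {}"
    and exch: "(A - A') \<union> B'' \<in> I" and "card B'' \<le> card A'"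
  shows "\<exists>A''\<subseteq>A'. card A'' = card B'' \<and> (A - A'') \<union> B'' \<in> I"
proof -
  have fin: "finite A" "finite B''"
    using matroid_indep_finite[OF M A] matroid_indep_finite[OF M exch] by auto
  have le: "card A' \<le> card A"
    using assms fin by (auto intro: card_mono)
  have card_exch: "card ((A - A') \<union> B'') = card A - card A' + card B''"
    using card_Diff_Un_disjoint[OF fin] assms by simp
  have "card ((A - A') \<union> B'') \<le> card A"
    using card_exch le assms(6) by linarith
  then obtain Z where Z: "Z \<subseteq> A - ((A - A') \<union> B'')" "(A - A') \<union> B'' \<union> Z \<in> I"
      "card ((A - A') \<union> B'' \<union> Z) = card A"
    using matroid_augment_to_card[OF M exch A _ order_refl] by blast
  have "Z \<subseteq> A'" using Z(1) by blast
  have "card ((A - A') \<union> B'' \<union> Z) = card ((A - A') \<union> B'') + card Z"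
    using Z(1) fin by (intro card_Un_disjoint) (auto intro: finite_subset)
  moreover have "card (A' - Z) = card A' - card Z"
    using \<open>Z \<subseteq> A'\<close> \<open>A' \<subseteq> A\<close> fin(1) by (meson card_Diff_subset finite_subset)
  ultimately have "card (A' - Z) = card B''"
    using Z(3) card_exch le assms(6) by linarith
  moreover have "(A - (A' - Z)) \<union> B'' = (A - A') \<union> B'' \<union> Z"
    using \<open>Z \<subseteq> A'\<close> assms by blast
  ultimately show ?thesis
    using Z(2) by (intro exI[of _ "A' - Z"]) auto
qed

lemma exchange_from_subsets:
  assumes M: "matroid E I" and A: "A \<in> I" and Q: "Q \<in> I"
    and "P \<subseteq> A" "A \<inter> Q = {}" "card Q \<le> card A"
  shows "\<exists>A1 B1. A1 \<subseteq> P \<and> B1 \<subseteq> Q \<and> card A1 = card B1 \<and> (A - A1) \<union> B1 \<in> I \<and>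
           card P + card Q \<le> card A1 + card A"
proof -
  have fin: "finite A" "finite Q"
    using matroid_indep_finite[OF M A] matroid_indep_finite[OF M Q] by auto
  have card_P: "card P \<le> card A" "card (A - P) = card A - card P"
    using \<open>P \<subseteq> A\<close> fin(1) by (simp_all add: card_mono card_Diff_subset finite_subset)
  show ?thesis
  proof (cases "card Q \<le> card (A - P)")
    case True
    then show ?thesis
      using A card_P by (intro exI[of _ "{}"]) auto
  next
    case False
    have "A - P \<in> I"
      using matroid_indep_subset[OF M A] by blast
    moreover have "card (A - P) \<le> card Q"
      using False by simp
    ultimately obtain Z where Z: "Z \<subseteq> Q - (A - P)" "(A - P) \<union> Z \<in> I" "card ((A - P) \<union> Z) = card Q"
      using matroid_augment_to_card[OF M _ Q _ order_refl] by blast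
    have "card ((A - P) \<union> Z) = card A - card P + card Z"
      using Z(1) assms fin by (intro card_Diff_Un_disjoint) (auto intro: finite_subset)
    then have card_Z: "card Z + card A = card P + card Q"
      using Z(3) card_P False by linarith
    moreover have "A \<inter> Z = {}"
      using Z(1) assms by blast
    ultimately obtain A1 where "A1 \<subseteq> P" "card A1 = card Z" "(A - A1) \<union> Z \<in> I"
      using exchange_balance_removed[OF M A \<open>P \<subseteq> A\<close> _ Z(2)] \<open>card Q \<le> card A\<close> by auto
    then show ?thesis
      using Z(1) card_Z by (intro exI[of _ A1] exI[of _ Z]) auto
  qed
qed

lemma unicolor_exchange:
  assumes M: "matroid E I" and A: "A \<in> I" and "A1 \<subseteq> A" "A \<inter> B1 = {}"
    and exch: "(A - A1) \<union> B1 \<in> I" and card_eq: "card A1 = card B1"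
    and C: "finite C" "C \<noteq> {}" "w ` (A1 \<union> B1) \<subseteq> C"
  shows "\<exists>A' B'. A' \<subseteq> A1 \<and> B' \<subseteq> B1 \<and> unicolor w A' \<and> unicolor w B' \<and> card A' = card B' \<and>
           (A - A') \<union> B' \<in> I \<and> card A1 \<le> card A' * card C ^ 2"
proof -
  have fin: "finite A1" "finite B1"
    using finite_subset[OF \<open>A1 \<subseteq> A\<close> matroid_indep_finite[OF M A]]
      matroid_indep_finite[OF M exch] by auto
  have "w ` B1 \<subseteq> C"
    using C(3) by blast
  then obtain B2 where B2: "B2 \<subseteq> B1" "unicolor w B2" "card B1 \<le> card B2 * card C"
    using unicolor_subset_pigeonhole[OF fin(2) C(1,2)] by blast
  have disj: "A \<inter> B2 = {}"
    using B2(1) \<open>A \<inter> B1 = {}\<close> by blast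
  have "(A - A1) \<union> B2 \<subseteq> (A - A1) \<union> B1"
    using B2(1) by blast
  then have "(A - A1) \<union> B2 \<in> I"
    by (rule matroid_indep_subset[OF M exch])
  moreover have "card B2 \<le> card A1"
    using card_mono[OF fin(2) B2(1)] card_eq by simp
  ultimately obtain A2 where A2: "A2 \<subseteq> A1" "card A2 = card B2" "(A - A2) \<union> B2 \<in> I"
    using exchange_balance_removed[OF M A \<open>A1 \<subseteq> A\<close> disj] by blast
  have "finite A2" "w ` A2 \<subseteq> C"
    using finite_subset[OF A2(1) fin(1)] A2(1) C(3) by auto
  then obtain A' where A': "A' \<subseteq> A2" "unicolor w A'" "card A2 \<le> card A' * card C"
    using unicolor_subset_pigeonhole[of A2 C w] C(1,2) by blast
  obtain B' where B': "B' \<subseteq> B2" "card B' = card A'" "(A - A') \<union> B' \<in> I"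
    using exchange_shrink_removed[OF M A _ disj A2(3) A2(2) A'(1)] A2(1) \<open>A1 \<subseteq> A\<close> by blast
  have "unicolor w B'"
    using B2(2) B'(1) unfolding unicolor_def by blast
  moreover have "card A1 \<le> card A' * card C ^ 2"
  proof -
    have "card A1 \<le> card A2 * card C"
      using card_eq B2(3) A2(2) by simp
    also have "\<dots> \<le> card A' * card C * card C"
      using A'(3) by (rule mult_le_mono1)
    finally show ?thesis
      by (simp add: power2_eq_square mult.assoc)
  qed
  ultimately show ?thesis
    using A' A2(1) B' B2(1) by (intro exI[of _ A'] exI[of _ B']) auto
qed

lemma threshold_exchange:
  assumes M: "matroid E I" and A: "A \<in> I" and B: "B \<in> I" and "A \<inter> B = {}"
    and "card B = card A" and weights: "w ` (A \<union> B) \<subseteq> {l..u}" "l \<le> u"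
  shows "\<exists>s A1 B1. A1 \<subseteq> {a\<in>A. s \<le> w a} \<and> B1 \<subseteq> {b\<in>B. w b \<le> s} \<and> card A1 = card B1 \<and>
           (A - A1) \<union> B1 \<in> I \<and> int (card A) + wsum w A - wsum w B \<le> (u - l + 1) * int (card A1)"
proof -
  have fin: "finite A" "finite B"
    using matroid_indep_finite[OF M A] matroid_indep_finite[OF M B] .
  obtain s where s: "int (card A) + wsum w A - wsum w B \<le>
      (u - l + 1) * (int (card {a\<in>A. s \<le> w a}) + int (card {b\<in>B. w b \<le> s}) - int (card A))"
    using exists_threshold[OF fin \<open>card B = card A\<close> weights] by blast
  have "{b\<in>B. w b \<le> s} \<in> I"
    by (rule matroid_indep_subset[OF M B]) auto
  moreover have "card {b\<in>B. w b \<le> s} \<le> card A"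
    unfolding \<open>card B = card A\<close>[symmetric] by (rule card_mono[OF fin(2)]) auto
  moreover have "A \<inter> {b\<in>B. w b \<le> s} = {}"
    using \<open>A \<inter> B = {}\<close> by blast
  ultimately obtain A1 B1 where AB1: "A1 \<subseteq> {a\<in>A. s \<le> w a}" "B1 \<subseteq> {b\<in>B. w b \<le> s}"
      "card A1 = card B1" "(A - A1) \<union> B1 \<in> I"
      "card {a\<in>A. s \<le> w a} + card {b\<in>B. w b \<le> s} \<le> card A1 + card A"
    using exchange_from_subsets[OF M A, of "{b\<in>B. w b \<le> s}" "{a\<in>A. s \<le> w a}"] by blast
  note s
  also have "(u - l + 1) * (int (card {a\<in>A. s \<le> w a}) + int (card {b\<in>B. w b \<le> s}) - int (card A))
      \<le> (u - l + 1) * int (card A1)"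
    using AB1(5) \<open>l \<le> u\<close> by (intro mult_left_mono) linarith+
  finally show ?thesis
    using AB1 by blast
qed

lemma unicolor_threshold_exchange:
  assumes M: "matroid E I" and A: "A \<in> I" and "B \<in> I" and "A \<inter> B = {}"
    and "card B = card A" and weights: "w ` (A \<union> B) \<subseteq> {l..u}" "l \<le> u"
  shows "\<exists>A' B'. A' \<subseteq> A \<and> B' \<subseteq> B \<and> unicolor w A' \<and> unicolor w B' \<and> card A' = card B' \<and>
           (A - A') \<union> B' \<in> I \<and> (\<forall>a\<in>A'. \<forall>b\<in>B'. w b \<le> w a) \<and>
           int (card A) + wsum w A - wsum w B \<le> int (card A') * (u - l + 1) ^ 3"
proof -
  obtain s A1 B1 where AB1: "A1 \<subseteq> {a\<in>A. s \<le> w a}" "B1 \<subseteq> {b\<in>B. w b \<le> s}"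
      "card A1 = card B1" "(A - A1) \<union> B1 \<in> I"
      "int (card A) + wsum w A - wsum w B \<le> (u - l + 1) * int (card A1)"
    using threshold_exchange[OF assms] by blast
  have sub: "A1 \<subseteq> A" "A \<inter> B1 = {}" "w ` (A1 \<union> B1) \<subseteq> {l..u}"
    using AB1(1,2) \<open>A \<inter> B = {}\<close> weights(1) by blast+
  have C: "finite {l..u}" "{l..u} \<noteq> {}"
    using \<open>l \<le> u\<close> by auto
  obtain A' B' where AB': "A' \<subseteq> A1" "B' \<subseteq> B1" "unicolor w A'" "unicolor w B'"
      "card A' = card B'" "(A - A') \<union> B' \<in> I" "card A1 \<le> card A' * card {l..u} ^ 2"
    using unicolor_exchange[OF M A sub(1,2) AB1(4,3) C sub(3)] by blast
  have card_C: "int (card {l..u}) = u - l + 1"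
    using \<open>l \<le> u\<close> by simp
  have "int (card A) + wsum w A - wsum w B \<le> (u - l + 1) * int (card A1)"
    by (fact AB1(5))
  also have "\<dots> \<le> (u - l + 1) * int (card A' * card {l..u} ^ 2)"
    using AB'(7) \<open>l \<le> u\<close> by (intro mult_left_mono of_nat_mono) auto
  also have "\<dots> = int (card A') * (u - l + 1) ^ 3"
    by (simp only: of_nat_mult of_nat_power card_C) (simp add: power2_eq_square power3_eq_cube)
  finally have "int (card A) + wsum w A - wsum w B \<le> int (card A') * (u - l + 1) ^ 3" .
  moreover have "\<forall>a\<in>A'. \<forall>b\<in>B'. w b \<le> w a"
    using AB1(1,2) AB'(1,2) by fastforce
  ultimately show ?thesis
    using AB' AB1(1,2) by (intro exI[of _ A'] exI[of _ B']) auto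
qed

theorem corollary9:
  fixes E :: "'a set" and I :: "'a set set" and w :: "'a \<Rightarrow> int"
    and \<Delta> :: nat and \<mu> :: real and A B :: "'a set" and k :: nat
  assumes "matroid E I"
    and "\<forall>e\<in>E. - int \<Delta> \<le> w e \<and> w e \<le> int \<Delta>"
    and "\<mu> \<ge> 0"
    and "A \<in> I" and "B \<in> I" and "A \<inter> B = {}"
    and "card A = k" and "card B = k"
    and "\<bar>real_of_int (wsum w A - wsum w B)\<bar> \<le> \<mu>"
  shows "\<exists>A' B'. A' \<subseteq> A \<and> B' \<subseteq> B \<and> unicolor w A' \<and> unicolor w B' \<and>
           card A' = card B' \<and>
           (A - A') \<union> B' \<in> I \<and>
           real (card A') \<ge> (real k - \<mu>) / (2 * real \<Delta> + 1) ^ 4 \<and>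
           (\<forall>a\<in>A'. \<forall>b\<in>B'. w a \<ge> w b)"
proof -
  have "A \<union> B \<subseteq> E"
    using matroid_indep_subset_ground[OF assms(1)] assms(4,5) by blast
  then have weights: "w ` (A \<union> B) \<subseteq> {- int \<Delta>..int \<Delta>}"
    using assms(2) by auto
  have "card B = card A" "- int \<Delta> \<le> int \<Delta>"
    using assms(7,8) by simp_all
  then obtain A' B' where AB': "A' \<subseteq> A" "B' \<subseteq> B" "unicolor w A'" "unicolor w B'"
      "card A' = card B'" "(A - A') \<union> B' \<in> I" "\<forall>a\<in>A'. \<forall>b\<in>B'. w b \<le> w a"
      "int (card A) + wsum w A - wsum w B \<le> int (card A') * (int \<Delta> - - int \<Delta> + 1) ^ 3"
    using unicolor_threshold_exchange[OF assms(1,4,5,6) _ weights] by blast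
  have width: "real_of_int (int \<Delta> - - int \<Delta> + 1) = 2 * real \<Delta> + 1"
    by simp
  have "real k - \<mu> \<le> of_int (int (card A) + wsum w A - wsum w B)"
    using assms(7,9) by linarith
  also have "\<dots> \<le> of_int (int (card A') * (int \<Delta> - - int \<Delta> + 1) ^ 3)"
    using AB'(8) by (simp only: of_int_le_iff)
  also have "\<dots> = real (card A') * (2 * real \<Delta> + 1) ^ 3"
    by (simp only: of_int_mult of_int_power of_int_of_nat_eq width)
  also have "\<dots> \<le> real (card A') * (2 * real \<Delta> + 1) ^ 4"
    by (intro mult_left_mono power_increasing) auto
  finally have "(real k - \<mu>) / (2 * real \<Delta> + 1) ^ 4 \<le> real (card A')"
    by (simp add: pos_divide_le_eq)
  then show ?thesis
    using AB' by blast
qed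

end
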